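(* Let $\mathcal{H}=\mathbb{C}^{d_1}\otimes\cdots\otimes\mathbb{C}^{d_N}$ with all $d_i\ge2$ and $G=SL(d_1,\mathbb{C})\times\cdots\times SL(d_N,\mathbb{C})$ acting on $\mathcal{H}$ by $g_1\otimes\cdots\otimes g_N$ and on $\mathbb{P}(\mathcal{H})$ by $g[\psi]=[g|\psi\rangle]$. For every semistable $|\Psi\rangle\in\mathcal{H}$, $\dim G|\Psi\rangle=\dim G[\Psi]$.
   Context: Orbits are complex submanifolds with $\dim G|\Psi\rangle=\dim G-\dim G_{|\Psi\rangle}$ and $\dim G[\Psi]=\dim G-\dim G_{[\Psi]}$, where $G_{|\Psi\rangle}=\{g: g|\Psi\rangle=|\Psi\rangle\}$ and $G_{[\Psi]}=\{g: g|\Psi\rangle\propto|\Psi\rangle\}$. A vector $|\Psi\rangle$ is semistable if $0\notin\overline{G|\Psi\rangle}$ (closure in the standard topology). *)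

theory Defs
  imports "HOL-Analysis.Analysis" "Jordan_Normal_Form.Determinant"
begin

text \<open>Multi-indices of the tensor product C^{d_0} (x) ... (x) C^{d_{N-1}}.
  A vector of the Hilbert space is a function on multi-indices vanishing outside idx.\<close>

definition idx :: "nat \<Rightarrow> (nat \<Rightarrow> nat) \<Rightarrow> (nat \<Rightarrow> nat) set" where
  "idx N d = PiE {..<N} (\<lambda>k. {..<d k})"

definition hspace :: "nat \<Rightarrow> (nat \<Rightarrow> nat) \<Rightarrow> ((nat \<Rightarrow> nat) \<Rightarrow> complex) set" where
  "hspace N d = {\<Psi>. \<forall>i. i \<notin> idx N d \<longrightarrow> \<Psi> i = 0}"

definition SLgroup :: "nat \<Rightarrow> (nat \<Rightarrow> nat) \<Rightarrow> (nat \<Rightarrow> complex mat) set" where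
  "SLgroup N d = {g. (\<forall>k<N. g k \<in> carrier_mat (d k) (d k) \<and> det (g k) = 1) \<and>
                      (\<forall>k\<ge>N. g k = 1\<^sub>m 0)}"

definition G_one :: "nat \<Rightarrow> (nat \<Rightarrow> nat) \<Rightarrow> nat \<Rightarrow> complex mat" where
  "G_one N d = (\<lambda>k. if k < N then 1\<^sub>m (d k) else 1\<^sub>m 0)"

definition act :: "nat \<Rightarrow> (nat \<Rightarrow> nat) \<Rightarrow> (nat \<Rightarrow> complex mat) \<Rightarrow>
                    ((nat \<Rightarrow> nat) \<Rightarrow> complex) \<Rightarrow> ((nat \<Rightarrow> nat) \<Rightarrow> complex)" where
  "act N d g \<Psi> = (\<lambda>i. if i \<in> idx N d
      then (\<Sum>j\<in>idx N d. (\<Prod>k<N. g k $$ (i k, j k)) * \<Psi> j) else 0)"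

definition orbit :: "nat \<Rightarrow> (nat \<Rightarrow> nat) \<Rightarrow> ((nat \<Rightarrow> nat) \<Rightarrow> complex) \<Rightarrow>
                     ((nat \<Rightarrow> nat) \<Rightarrow> complex) set" where
  "orbit N d \<Psi> = (\<lambda>g. act N d g \<Psi>) ` SLgroup N d"

text \<open>Semistable: 0 is not in the closure of the orbit (standard topology; the product
  topology on functions restricts to the standard one on the finite-dimensional hspace).\<close>

definition semistable :: "nat \<Rightarrow> (nat \<Rightarrow> nat) \<Rightarrow> ((nat \<Rightarrow> nat) \<Rightarrow> complex) \<Rightarrow> bool" where
  "semistable N d \<Psi> \<longleftrightarrow> (\<lambda>_. 0) \<notin> closure (orbit N d \<Psi>)"

definition stab :: "nat \<Rightarrow> (nat \<Rightarrow> nat) \<Rightarrow> ((nat \<Rightarrow> nat) \<Rightarrow> complex) \<Rightarrow> (nat \<Rightarrow> complex mat) set" where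
  "stab N d \<Psi> = {g \<in> SLgroup N d. act N d g \<Psi> = \<Psi>}"

definition proj_stab :: "nat \<Rightarrow> (nat \<Rightarrow> nat) \<Rightarrow> ((nat \<Rightarrow> nat) \<Rightarrow> complex) \<Rightarrow> (nat \<Rightarrow> complex mat) set" where
  "proj_stab N d \<Psi> = {g \<in> SLgroup N d. \<exists>c::complex. act N d g \<Psi> = (\<lambda>i. c * \<Psi> i)}"

text \<open>Tangent space at the identity (= Lie algebra for closed subgroups) of a subset H of G:
  velocities at t = 0 of real curves in H through the identity.\<close>

definition tangent :: "nat \<Rightarrow> (nat \<Rightarrow> nat) \<Rightarrow> (nat \<Rightarrow> complex mat) set \<Rightarrow> (nat \<Rightarrow> complex mat) set" where
  "tangent N d H = {X. (\<forall>k<N. X k \<in> carrier_mat (d k) (d k)) \<and> (\<forall>k\<ge>N. X k = 0\<^sub>m 0 0) \<and>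
      (\<exists>\<gamma>::real \<Rightarrow> nat \<Rightarrow> complex mat. (\<forall>t. \<gamma> t \<in> H) \<and> \<gamma> 0 = G_one N d \<and>
         (\<forall>k<N. \<forall>a<d k. \<forall>b<d k.
            ((\<lambda>t. \<gamma> t k $$ (a, b)) has_vector_derivative (X k $$ (a, b))) (at 0)))}"

definition c_indep :: "nat \<Rightarrow> (nat \<Rightarrow> nat) \<Rightarrow> (nat \<Rightarrow> complex mat) set \<Rightarrow> bool" where
  "c_indep N d F \<longleftrightarrow> (\<forall>c :: (nat \<Rightarrow> complex mat) \<Rightarrow> complex.
      (\<forall>k<N. \<forall>a<d k. \<forall>b<d k. (\<Sum>x\<in>F. c x * x k $$ (a, b)) = 0) \<longrightarrow> (\<forall>x\<in>F. c x = 0))"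

definition lie_dim :: "nat \<Rightarrow> (nat \<Rightarrow> nat) \<Rightarrow> (nat \<Rightarrow> complex mat) set \<Rightarrow> nat" where
  "lie_dim N d H = Sup {card F | F. finite F \<and> F \<subseteq> tangent N d H \<and> c_indep N d F}"

definition orbit_dim :: "nat \<Rightarrow> (nat \<Rightarrow> nat) \<Rightarrow> ((nat \<Rightarrow> nat) \<Rightarrow> complex) \<Rightarrow> nat" where
  "orbit_dim N d \<Psi> = lie_dim N d (SLgroup N d) - lie_dim N d (stab N d \<Psi>)"

definition proj_orbit_dim :: "nat \<Rightarrow> (nat \<Rightarrow> nat) \<Rightarrow> ((nat \<Rightarrow> nat) \<Rightarrow> complex) \<Rightarrow> nat" where
  "proj_orbit_dim N d \<Psi> = lie_dim N d (SLgroup N d) - lie_dim N d (proj_stab N d \<Psi>)"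

end

theory Submission
  imports Defs "Jordan_Normal_Form.Schur_Decomposition"
begin

(* Since G_{|Psi>} is contained in G_{[Psi]}, it suffices to show that every tangent vector X
   of G_{[Psi]} at the identity is tangent to G_{|Psi>}. Differentiating g(t)|Psi> = c(t)|Psi>
   shows that X is traceless and that |Psi> is an eigenvector of the infinitesimal action,
   L_X Psi = mu Psi. If mu were nonzero, the one-parameter subgroup exp(-t X / mu) of G would
   scale Psi by e^{-t}, putting 0 into the closure of the orbit. Hence L_X Psi = 0, and then
   t |-> exp(t X) is a curve in G_{|Psi>} with velocity X; it lies in G because
   det exp(t X) = exp(t tr X), which follows from Schur triangularisation. *)

section \<open>Trace and exponential of complex matrices\<close>

lemma index_mult_mat_sum:
  fixes X Y :: "'a::semiring_0 mat"
  assumes "X \<in> carrier_mat n m" "Y \<in> carrier_mat m p" "a < n" "b < p"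
  shows "(X * Y) $$ (a,b) = (\<Sum>c<m. X $$ (a,c) * Y $$ (c,b))"
  using assms by (auto simp: scalar_prod_def lessThan_atLeast0)

definition mat_trace :: "'a::comm_ring mat \<Rightarrow> 'a" where
  "mat_trace A = (\<Sum>i<dim_row A. A $$ (i,i))"

lemma mat_trace_smult: "A \<in> carrier_mat n n \<Longrightarrow> mat_trace (c \<cdot>\<^sub>m A) = c * mat_trace A"
  unfolding mat_trace_def by (auto simp: sum_distrib_left)

lemma mat_trace_mult_comm:
  fixes A B :: "'a::comm_ring mat"
  assumes A: "A \<in> carrier_mat n m" and B: "B \<in> carrier_mat m n"
  shows "mat_trace (A * B) = mat_trace (B * A)"
proof -
  have dims: "dim_row (A * B) = n" "dim_row (B * A) = m"
    using A B by (metis carrier_matD(1) index_mult_mat(2))+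
  have "mat_trace (A * B) = (\<Sum>i<n. \<Sum>j<m. A $$ (i,j) * B $$ (j,i))"
    using A B by (auto simp: mat_trace_def dims index_mult_mat_sum simp del: index_mult_mat intro!: sum.cong)
  also have "\<dots> = (\<Sum>j<m. \<Sum>i<n. B $$ (j,i) * A $$ (i,j))"
    by (subst sum.swap) (simp add: mult.commute)
  also have "\<dots> = mat_trace (B * A)"
    using A B by (auto simp: mat_trace_def dims index_mult_mat_sum simp del: index_mult_mat intro!: sum.cong)
  finally show ?thesis .
qed

lemma mat_trace_similar:
  fixes A B :: "'a::comm_ring_1 mat"
  assumes wit: "similar_mat_wit A B P Q" and A: "A \<in> carrier_mat n n"
  shows "mat_trace A = mat_trace B"
proof -
  note w = similar_mat_witD2[OF A wit]
  have "mat_trace A = mat_trace (P * B * Q)" using w by simp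
  also have "\<dots> = mat_trace (Q * (P * B))" using w by (intro mat_trace_mult_comm) auto
  also have "Q * (P * B) = B" using w by (metis assoc_mult_mat left_mult_one_mat)
  finally show ?thesis .
qed

definition mat_exp :: "complex mat \<Rightarrow> complex \<Rightarrow> complex mat" where
  "mat_exp A z = mat (dim_row A) (dim_row A) (\<lambda>(a,b). \<Sum>m. (A ^\<^sub>m m) $$ (a,b) / fact m * z ^ m)"

lemma mat_exp_carrier [simp]: "A \<in> carrier_mat n n \<Longrightarrow> mat_exp A z \<in> carrier_mat n n"
  unfolding mat_exp_def by auto

lemma dim_mat_exp [simp]:
  "dim_row (mat_exp A z) = dim_row A" "dim_col (mat_exp A z) = dim_row A"
  unfolding mat_exp_def by auto

lemma index_mat_exp:
  "A \<in> carrier_mat n n \<Longrightarrow> a < n \<Longrightarrow> b < n \<Longrightarrow>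
   mat_exp A z $$ (a,b) = (\<Sum>m. (A ^\<^sub>m m) $$ (a,b) / fact m * z ^ m)"
  unfolding mat_exp_def by auto

lemma norm_pow_mat_entry_le:
  fixes A :: "'a::real_normed_field mat"
  assumes A: "A \<in> carrier_mat n n" and K: "\<And>i j. i < n \<Longrightarrow> j < n \<Longrightarrow> norm (A $$ (i,j)) \<le> K"
    and "a < n" "b < n"
  shows "norm ((A ^\<^sub>m m) $$ (a,b)) \<le> (real n * K) ^ m"
  using assms(3,4)
proof (induction m arbitrary: b)
  case 0
  then show ?case using A by auto
next
  case (Suc m)
  have "K \<ge> 0" using K[of a a] Suc.prems by (meson norm_ge_zero order.trans)
  have "norm ((A ^\<^sub>m Suc m) $$ (a,b)) = norm (\<Sum>c<n. (A ^\<^sub>m m) $$ (a,c) * A $$ (c,b))"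
    using A Suc.prems by (simp add: index_mult_mat_sum[of _ n n] del: index_mult_mat)
  also have "\<dots> \<le> (\<Sum>c<n. norm ((A ^\<^sub>m m) $$ (a,c)) * norm (A $$ (c,b)))"
    by (rule order.trans[OF norm_sum]) (simp add: norm_mult)
  also have "\<dots> \<le> (\<Sum>c<n. (real n * K) ^ m * K)"
    by (intro sum_mono mult_mono Suc.IH K) (use Suc.prems \<open>K \<ge> 0\<close> in auto)
  also have "\<dots> = (real n * K) ^ Suc m" by simp
  finally show ?case .
qed

lemma summable_mat_exp_entry:
  fixes A :: "complex mat"
  assumes A: "A \<in> carrier_mat n n" and "a < n" "b < n"
  shows "summable (\<lambda>m. (A ^\<^sub>m m) $$ (a,b) / fact m * z ^ m)"
proof -
  define K where "K = (\<Sum>i<n. \<Sum>j<n. norm (A $$ (i,j)))"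
  have K: "norm (A $$ (i,j)) \<le> K" if "i < n" "j < n" for i j
  proof -
    have "norm (A $$ (i,j)) \<le> (\<Sum>j'<n. norm (A $$ (i,j')))"
      by (rule member_le_sum) (use that in auto)
    also have "\<dots> \<le> K"
      unfolding K_def by (rule member_le_sum[where f="\<lambda>i. \<Sum>j'<n. norm (A $$ (i,j'))"])
        (use that in \<open>auto intro: sum_nonneg\<close>)
    finally show ?thesis .
  qed
  show ?thesis
  proof (rule summable_comparison_test'[OF summable_exp[of "real n * K * norm z"]])
    fix m
    have "norm ((A ^\<^sub>m m) $$ (a,b) / fact m * z ^ m) = norm ((A ^\<^sub>m m) $$ (a,b)) * norm z ^ m / fact m"
      by (simp add: norm_mult norm_divide norm_power)
    also have "\<dots> \<le> (real n * K) ^ m * norm z ^ m / fact m"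
      by (intro divide_right_mono mult_right_mono norm_pow_mat_entry_le[OF A K]) (use assms in auto)
    also have "\<dots> = inverse (fact m) * (real n * K * norm z) ^ m"
      by (simp add: field_simps)
    finally show "norm ((A ^\<^sub>m m) $$ (a,b) / fact m * z ^ m) \<le> inverse (fact m) * (real n * K * norm z) ^ m" .
  qed
qed

lemma mat_exp_zero:
  assumes A: "A \<in> carrier_mat n n"
  shows "mat_exp A 0 = 1\<^sub>m n"
proof (rule eq_matI)
  fix i j assume "i < dim_row (1\<^sub>m n)" "j < dim_col (1\<^sub>m n)"
  then show "mat_exp A 0 $$ (i,j) = 1\<^sub>m n $$ (i,j)"
    using A powser_zero[of "\<lambda>m. (A ^\<^sub>m m) $$ (i,j) / fact m"] by (simp add: index_mat_exp)
qed (use A in \<open>auto simp: mat_exp_def\<close>)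

lemma mat_exp_has_field_derivative:
  fixes A :: "complex mat"
  assumes A: "A \<in> carrier_mat n n" and ab: "a < n" "b < n"
  shows "((\<lambda>z. mat_exp A z $$ (a,b)) has_field_derivative (mat_exp A z * A) $$ (a,b)) (at z)"
proof -
  define c where "c = (\<lambda>m. (A ^\<^sub>m m) $$ (a,b) / fact m)"
  have "((\<lambda>z. \<Sum>m. c m * z ^ m) has_field_derivative (\<Sum>m. diffs c m * z ^ m)) (at z)"
    unfolding c_def by (intro termdiffs_strong_converges_everywhere summable_mat_exp_entry[OF A ab])
  moreover have "(\<lambda>z. mat_exp A z $$ (a,b)) = (\<lambda>z. \<Sum>m. c m * z ^ m)"
    using A ab by (simp add: index_mat_exp c_def)
  moreover have "(\<Sum>m. diffs c m * z ^ m) = (\<Sum>m. \<Sum>e<n. (A ^\<^sub>m m) $$ (a,e) / fact m * z ^ m * A $$ (e,b))"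
  proof (rule suminf_cong)
    fix m
    have "diffs c m = (A ^\<^sub>m Suc m) $$ (a,b) / fact m"
      by (simp add: diffs_def c_def del: pow_mat.simps of_nat_Suc)
    also have "\<dots> = (\<Sum>e<n. (A ^\<^sub>m m) $$ (a,e) * A $$ (e,b)) / fact m"
      using A ab by (simp add: index_mult_mat_sum[of _ n n] del: index_mult_mat)
    finally show "diffs c m * z ^ m = (\<Sum>e<n. (A ^\<^sub>m m) $$ (a,e) / fact m * z ^ m * A $$ (e,b))"
      by (simp add: sum_divide_distrib sum_distrib_right sum_distrib_left mult_ac)
  qed
  moreover have "\<dots> = (\<Sum>e<n. \<Sum>m. (A ^\<^sub>m m) $$ (a,e) / fact m * z ^ m * A $$ (e,b))"
    by (rule suminf_sum) (intro summable_mult2 summable_mat_exp_entry[OF A ab(1)], simp)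
  moreover have "\<dots> = (\<Sum>e<n. (\<Sum>m. (A ^\<^sub>m m) $$ (a,e) / fact m * z ^ m) * A $$ (e,b))"
    by (intro sum.cong refl suminf_mult2[symmetric] summable_mat_exp_entry[OF A ab(1)]) simp
  moreover have "\<dots> = (mat_exp A z * A) $$ (a,b)"
    using A ab by (simp add: index_mult_mat_sum[of _ n n] index_mat_exp del: index_mult_mat)
  ultimately show ?thesis by simp
qed

lemma index_mult_mat_triple:
  fixes P M Q :: "'a::semiring_0 mat"
  assumes "P \<in> carrier_mat n n" "M \<in> carrier_mat n n" "Q \<in> carrier_mat n n" "a < n" "b < n"
  shows "(P * M * Q) $$ (a,b) = (\<Sum>c<n. \<Sum>e<n. P $$ (a,c) * M $$ (c,e) * Q $$ (e,b))"
proof -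
  have "(P * M * Q) $$ (a,b) = (\<Sum>e<n. (P * M) $$ (a,e) * Q $$ (e,b))"
    by (rule index_mult_mat_sum) (use assms in auto)
  also have "\<dots> = (\<Sum>e<n. (\<Sum>c<n. P $$ (a,c) * M $$ (c,e)) * Q $$ (e,b))"
    using assms by (intro sum.cong refl) (simp add: index_mult_mat_sum[of _ n n] del: index_mult_mat)
  also have "\<dots> = (\<Sum>c<n. \<Sum>e<n. P $$ (a,c) * M $$ (c,e) * Q $$ (e,b))"
    by (subst sum.swap) (simp add: sum_distrib_right)
  finally show ?thesis .
qed

lemma suminf_sandwich_sum:
  fixes f :: "nat \<Rightarrow> nat \<Rightarrow> nat \<Rightarrow> complex"
  assumes f: "\<And>c e. c < n \<Longrightarrow> e < n \<Longrightarrow> summable (f c e)"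
  shows "(\<Sum>m. \<Sum>c<n. \<Sum>e<n. p c * f c e m * q e) = (\<Sum>c<n. \<Sum>e<n. p c * suminf (f c e) * q e)"
proof -
  have s: "summable (\<lambda>m. p c * f c e m * q e)" if "c < n" "e < n" for c e
    using f[OF that] by (intro summable_mult2 summable_mult)
  have "(\<Sum>m. \<Sum>c<n. \<Sum>e<n. p c * f c e m * q e) = (\<Sum>c<n. \<Sum>e<n. \<Sum>m. p c * f c e m * q e)"
    using s by (subst suminf_sum) (auto intro!: summable_sum sum.cong suminf_sum)
  also have "\<dots> = (\<Sum>c<n. \<Sum>e<n. p c * suminf (f c e) * q e)"
    using f by (intro sum.cong refl) (simp add: suminf_mult2[symmetric] summable_mult suminf_mult)
  finally show ?thesis .
qed

lemma similar_mat_wit_mat_exp: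
  assumes wit: "similar_mat_wit A B P Q" and A: "A \<in> carrier_mat n n"
  shows "similar_mat_wit (mat_exp A z) (mat_exp B z) P Q"
proof -
  note w = similar_mat_witD2[OF A wit]
  have "mat_exp A z = P * mat_exp B z * Q"
  proof (rule eq_matI)
    fix a b assume "a < dim_row (P * mat_exp B z * Q)" "b < dim_col (P * mat_exp B z * Q)"
    then have ab: "a < n" "b < n" using w by auto
    have "mat_exp A z $$ (a,b) =
        (\<Sum>m. \<Sum>c<n. \<Sum>e<n. P $$ (a,c) * ((B ^\<^sub>m m) $$ (c,e) / fact m * z ^ m) * Q $$ (e,b))"
    proof (subst index_mat_exp[OF A ab], rule suminf_cong)
      fix m
      have "(A ^\<^sub>m m) $$ (a,b) = (\<Sum>c<n. \<Sum>e<n. P $$ (a,c) * (B ^\<^sub>m m) $$ (c,e) * Q $$ (e,b))"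
        unfolding similar_mat_wit_pow_id[OF wit] by (rule index_mult_mat_triple) (use w ab in auto)
      then show "(A ^\<^sub>m m) $$ (a,b) / fact m * z ^ m =
          (\<Sum>c<n. \<Sum>e<n. P $$ (a,c) * ((B ^\<^sub>m m) $$ (c,e) / fact m * z ^ m) * Q $$ (e,b))"
        by (simp add: sum_divide_distrib sum_distrib_right sum_distrib_left mult_ac)
    qed
    also have "\<dots> = (\<Sum>c<n. \<Sum>e<n. P $$ (a,c) * (\<Sum>m. (B ^\<^sub>m m) $$ (c,e) / fact m * z ^ m) * Q $$ (e,b))"
      by (rule suminf_sandwich_sum) (rule summable_mat_exp_entry[OF w(5)])
    also have "\<dots> = (\<Sum>c<n. \<Sum>e<n. P $$ (a,c) * mat_exp B z $$ (c,e) * Q $$ (e,b))"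
      using w by (simp add: index_mat_exp)
    also have "\<dots> = (P * mat_exp B z * Q) $$ (a,b)"
      by (rule index_mult_mat_triple[symmetric]) (use w ab in auto)
    finally show "mat_exp A z $$ (a,b) = (P * mat_exp B z * Q) $$ (a,b)" .
  qed (use w A in auto)
  then show ?thesis using w by (intro similar_mat_witI) auto
qed

lemma upper_triangular_pow_mat:
  fixes B :: "'a::comm_semiring_1 mat"
  assumes B: "B \<in> carrier_mat n n" and ut: "upper_triangular B"
  shows "\<forall>i<n. \<forall>j<n. (j < i \<longrightarrow> (B ^\<^sub>m m) $$ (i,j) = 0) \<and> (B ^\<^sub>m m) $$ (i,i) = B $$ (i,i) ^ m"
proof (induction m)
  case 0
  then show ?case using B by auto
next
  case (Suc m)
  have below: "B $$ (c,j) = 0" if "c < n" "j < c" for c j using ut B that by auto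
  have entry: "(B ^\<^sub>m Suc m) $$ (i,j) = (\<Sum>c<n. (B ^\<^sub>m m) $$ (i,c) * B $$ (c,j))"
    if "i < n" "j < n" for i j
    using B that by (simp add: index_mult_mat_sum[of _ n n] del: index_mult_mat)
  show ?case
  proof (intro allI impI conjI)
    fix i j assume ij: "i < n" "j < n" "j < i"
    have "(B ^\<^sub>m m) $$ (i,c) * B $$ (c,j) = 0" if "c < n" for c
      using Suc.IH below[of c j] ij that by (cases "c < i") auto
    then show "(B ^\<^sub>m Suc m) $$ (i,j) = 0"
      unfolding entry[OF ij(1,2)] by (auto intro!: sum.neutral)
  next
    fix i assume i: "i < n"
    have "(B ^\<^sub>m m) $$ (i,c) * B $$ (c,i) = 0" if "c < n" "c \<noteq> i" for c
      using Suc.IH below[of c i] i that by (cases "c < i") auto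
    then have "(B ^\<^sub>m Suc m) $$ (i,i) = (\<Sum>c\<in>{i}. (B ^\<^sub>m m) $$ (i,c) * B $$ (c,i))"
      unfolding entry[OF i i] using i by (intro sum.mono_neutral_right) auto
    then show "(B ^\<^sub>m Suc m) $$ (i,i) = B $$ (i,i) ^ Suc m" using Suc.IH i by (simp add: mult.commute)
  qed
qed

lemma exp_mult_eq_series: "exp (z * b) = (\<Sum>m. b ^ m / fact m * z ^ m)" for z b :: complex
  unfolding exp_def by (rule suminf_cong) (simp add: scaleR_conv_of_real field_simps)

lemma det_mat_exp_upper_triangular:
  assumes B: "B \<in> carrier_mat n n" and ut: "upper_triangular B"
  shows "det (mat_exp B z) = exp (z * mat_trace B)"
proof -
  note pow = upper_triangular_pow_mat[OF B ut]
  have "upper_triangular (mat_exp B z)"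
  proof (rule upper_triangularI)
    fix i j assume "j < i" "i < dim_row (mat_exp B z)"
    then show "mat_exp B z $$ (i,j) = 0" using B pow by (simp add: index_mat_exp)
  qed
  then have "det (mat_exp B z) = (\<Prod>i<n. mat_exp B z $$ (i,i))"
    using B by (simp add: det_upper_triangular[of _ n] prod_list_diag_prod lessThan_atLeast0)
  also have "\<dots> = (\<Prod>i<n. exp (z * B $$ (i,i)))"
    using B pow by (intro prod.cong refl) (simp add: index_mat_exp exp_mult_eq_series)
  also have "\<dots> = exp (z * mat_trace B)"
    using B by (simp add: mat_trace_def exp_sum sum_distrib_left)
  finally show ?thesis .
qed

lemma det_mat_exp:
  assumes A: "A \<in> carrier_mat n n"
  shows "det (mat_exp A z) = exp (z * mat_trace A)"
proof -
  obtain es where "char_poly A = (\<Prod>a\<leftarrow>es. [:- a, 1:])"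
    using char_poly_factorized[OF A] by blast
  from schur_upper_triangular[OF A this]
  obtain B P Q where B: "B \<in> carrier_mat n n" "upper_triangular B" and wit: "similar_mat_wit A B P Q"
    unfolding similar_mat_def by blast
  have "det (mat_exp A z) = det (mat_exp B z)"
    using similar_mat_wit_mat_exp[OF wit A] by (intro det_similar) (auto simp: similar_mat_def)
  also have "\<dots> = exp (z * mat_trace B)"
    by (rule det_mat_exp_upper_triangular[OF B])
  also have "mat_trace B = mat_trace A"
    using mat_trace_similar[OF wit A] by simp
  finally show ?thesis .
qed

section \<open>Jacobi's formula at the identity\<close>

lemma has_vector_derivative_prod:
  fixes f :: "'i \<Rightarrow> real \<Rightarrow> 'a::real_normed_field"
  assumes "\<And>i. i \<in> I \<Longrightarrow> (f i has_vector_derivative D i) (at x within S)"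
  shows "((\<lambda>t. \<Prod>i\<in>I. f i t) has_vector_derivative (\<Sum>i\<in>I. D i * (\<Prod>j\<in>I - {i}. f j x))) (at x within S)"
  unfolding has_vector_derivative_def
proof (rule has_derivative_eq_rhs)
  show "((\<lambda>t. \<Prod>i\<in>I. f i t) has_derivative (\<lambda>y. \<Sum>i\<in>I. (y *\<^sub>R D i) * (\<Prod>j\<in>I - {i}. f j x))) (at x within S)"
    using assms by (intro has_derivative_prod) (simp add: has_vector_derivative_def)
  show "(\<lambda>y. \<Sum>i\<in>I. (y *\<^sub>R D i) * (\<Prod>j\<in>I - {i}. f j x)) = (\<lambda>y. y *\<^sub>R (\<Sum>i\<in>I. D i * (\<Prod>j\<in>I - {i}. f j x)))"
    by (simp add: scaleR_conv_of_real sum_distrib_left mult_ac)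
qed

lemma permutes_eq_id_if_fixes_all_but_one:
  assumes p: "p permutes S" and fixed: "\<And>j. j \<in> S \<Longrightarrow> j \<noteq> i \<Longrightarrow> p j = j"
  shows "p = id"
proof -
  have other: "p j = j" if "j \<noteq> i" for j
    using fixed permutes_not_in[OF p] that by blast
  have "p i = i"
  proof (rule ccontr)
    assume "p i \<noteq> i"
    then have "p (p i) = p i" using other by blast
    with \<open>p i \<noteq> i\<close> show False using permutes_inj[OF p] by (auto dest: injD)
  qed
  with other show ?thesis by (metis id_apply ext)
qed

lemma has_vector_derivative_det_at_one:
  fixes M :: "real \<Rightarrow> complex mat"
  assumes M: "\<And>t. M t \<in> carrier_mat n n" and M0: "M 0 = 1\<^sub>m n"
    and M': "\<And>a b. a < n \<Longrightarrow> b < n \<Longrightarrow> ((\<lambda>t. M t $$ (a,b)) has_vector_derivative X $$ (a,b)) (at 0)"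
  shows "((\<lambda>t. det (M t)) has_vector_derivative (\<Sum>i<n. X $$ (i,i))) (at 0)"
proof -
  let ?P = "{p. p permutes {0..<n}}"
  let ?D = "\<lambda>p. signof p * (\<Sum>i\<in>{0..<n}. X $$ (i, p i) * (\<Prod>j\<in>{0..<n} - {i}. M 0 $$ (j, p j)))"
  have "det (M t) = (\<Sum>p\<in>?P. signof p * (\<Prod>i = 0..<n. M t $$ (i, p i)))" for t
    using M[of t] unfolding det_def by auto
  moreover have "((\<lambda>t. \<Sum>p\<in>?P. signof p * (\<Prod>i = 0..<n. M t $$ (i, p i))) has_vector_derivative
      (\<Sum>p\<in>?P. ?D p)) (at 0)"
    by (intro has_vector_derivative_sum has_vector_derivative_mult_right has_vector_derivative_prod M')
      (auto simp: permutes_in_image)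
  moreover have "?D p = 0" if p: "p \<in> ?P" "p \<noteq> id" for p
  proof -
    have zero: "(\<Prod>j\<in>{0..<n} - {i}. M 0 $$ (j, p j)) = 0" if i: "i \<in> {0..<n}" for i
    proof -
      obtain j where j: "j \<in> {0..<n}" "j \<noteq> i" "p j \<noteq> j"
        using permutes_eq_id_if_fixes_all_but_one[of p "{0..<n}" i] p by blast
      then have "p j \<in> {0..<n}" using p by (auto simp: permutes_in_image)
      with j show ?thesis by (intro prod_zero) (auto simp: M0 intro!: bexI[where x=j])
    qed
    have "(\<Sum>i\<in>{0..<n}. X $$ (i, p i) * (\<Prod>j\<in>{0..<n} - {i}. M 0 $$ (j, p j))) = 0"
      by (rule sum.neutral) (metis zero mult_zero_right)
    then show ?thesis by simp
  qed
  then have "(\<Sum>p\<in>?P. ?D p) = (\<Sum>p\<in>{id}. ?D p)"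
    by (intro sum.mono_neutral_right) (auto simp: finite_permutations)
  moreover have "\<dots> = (\<Sum>i<n. X $$ (i,i))"
    by (auto simp: M0 signof_id lessThan_atLeast0 intro!: sum.cong prod.neutral)
  ultimately show ?thesis by simp
qed

section \<open>The tensor product action and its derivative\<close>

lemma idx_lt: "i \<in> idx N d \<Longrightarrow> k < N \<Longrightarrow> i k < d k"
  unfolding idx_def by (auto simp: PiE_iff)

lemma finite_idx [simp]: "finite (idx N d)"
  unfolding idx_def by (auto intro!: finite_PiE)

lemma act_cong: "(\<And>k. k < N \<Longrightarrow> g k = h k) \<Longrightarrow> act N d g \<Psi> = act N d h \<Psi>"
  unfolding act_def by (intro ext if_cong refl sum.cong arg_cong2[where f="(*)"] prod.cong) auto

lemma act_zero: "act N d g (\<lambda>_. 0) = (\<lambda>_. 0)"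
  by (simp add: act_def fun_eq_iff)

lemma act_scale: "act N d g (\<lambda>i. c * \<Psi> i) = (\<lambda>i. c * act N d g \<Psi> i)"
  by (simp add: act_def sum_distrib_left mult_ac fun_eq_iff)

lemma act_sum: "act N d g (\<lambda>i. \<Sum>k\<in>K. \<phi> k i) = (\<lambda>i. \<Sum>k\<in>K. act N d g (\<phi> k) i)"
  by (auto simp: act_def sum_distrib_left fun_eq_iff intro: sum.swap)

lemma act_G_one:
  assumes \<Psi>: "\<Psi> \<in> hspace N d"
  shows "act N d (G_one N d) \<Psi> = \<Psi>"
proof
  fix i
  show "act N d (G_one N d) \<Psi> i = \<Psi> i"
  proof (cases "i \<in> idx N d")
    case False
    then show ?thesis using \<Psi> by (simp add: act_def hspace_def)
  next
    case i: True
    have "(\<Prod>k<N. G_one N d k $$ (i k, j k)) * \<Psi> j = (if j = i then \<Psi> i else 0)"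
      if j: "j \<in> idx N d" for j
    proof (cases "j = i")
      case True
      with i show ?thesis by (simp add: G_one_def idx_lt)
    next
      case False
      then obtain k where "k < N" "j k \<noteq> i k"
        using i j unfolding idx_def by (metis PiE_ext lessThan_iff)
      with i j have "(\<Prod>k<N. G_one N d k $$ (i k, j k)) = 0"
        by (intro prod_zero) (auto simp: G_one_def idx_lt intro!: bexI[where x=k])
      with False show ?thesis by simp
    qed
    with i show ?thesis by (simp add: act_def cong: sum.cong)
  qed
qed

lemma act_mult:
  assumes g: "\<And>k. k < N \<Longrightarrow> g k \<in> carrier_mat (d k) (d k)"
    and h: "\<And>k. k < N \<Longrightarrow> h k \<in> carrier_mat (d k) (d k)"
  shows "act N d g (act N d h \<Psi>) = act N d (\<lambda>k. g k * h k) \<Psi>"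
proof
  fix i
  show "act N d g (act N d h \<Psi>) i = act N d (\<lambda>k. g k * h k) \<Psi> i"
  proof (cases "i \<in> idx N d")
    case False
    then show ?thesis by (simp add: act_def)
  next
    case i: True
    have entry: "(\<Prod>k<N. (g k * h k) $$ (i k, m k)) =
        (\<Sum>j\<in>idx N d. (\<Prod>k<N. g k $$ (i k, j k)) * (\<Prod>k<N. h k $$ (j k, m k)))"
      if m: "m \<in> idx N d" for m
    proof -
      have "(g k * h k) $$ (i k, m k) = (\<Sum>c<d k. g k $$ (i k, c) * h k $$ (c, m k))" if "k < N" for k
        by (rule index_mult_mat_sum[of "g k" "d k" "d k" "h k" "d k"]) (use g h i m idx_lt that in auto)
      then have "(\<Prod>k<N. (g k * h k) $$ (i k, m k)) = (\<Prod>k<N. \<Sum>c<d k. g k $$ (i k, c) * h k $$ (c, m k))"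
        by simp
      also have "\<dots> = (\<Sum>j\<in>idx N d. \<Prod>k<N. g k $$ (i k, j k) * h k $$ (j k, m k))"
        unfolding idx_def by (rule prod_sum_PiE) auto
      finally show ?thesis by (simp add: prod.distrib)
    qed
    have "act N d g (act N d h \<Psi>) i =
        (\<Sum>j\<in>idx N d. \<Sum>m\<in>idx N d. (\<Prod>k<N. g k $$ (i k, j k)) * (\<Prod>k<N. h k $$ (j k, m k)) * \<Psi> m)"
      using i by (simp add: act_def sum_distrib_left mult_ac cong: sum.cong)
    also have "\<dots> = (\<Sum>m\<in>idx N d. (\<Prod>k<N. (g k * h k) $$ (i k, m k)) * \<Psi> m)"
      by (subst sum.swap) (simp add: entry sum_distrib_right)
    also have "\<dots> = act N d (\<lambda>k. g k * h k) \<Psi> i"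
      using i by (simp add: act_def)
    finally show ?thesis .
  qed
qed

lemma act_update_smult:
  assumes k: "k < N" and g: "g k \<in> carrier_mat (d k) (d k)"
  shows "act N d (g(k := c \<cdot>\<^sub>m g k)) \<Psi> = (\<lambda>i. c * act N d g \<Psi> i)"
proof -
  have "(\<Prod>l<N. (g(k := c \<cdot>\<^sub>m g k)) l $$ (i l, j l)) = c * (\<Prod>l<N. g l $$ (i l, j l))"
    if "i \<in> idx N d" "j \<in> idx N d" for i j
  proof -
    have "(c \<cdot>\<^sub>m g k) $$ (i k, j k) = c * g k $$ (i k, j k)"
      using g k that idx_lt by auto
    moreover have "(\<Prod>l\<in>{..<N} - {k}. (g(k := c \<cdot>\<^sub>m g k)) l $$ (i l, j l)) = (\<Prod>l\<in>{..<N} - {k}. g l $$ (i l, j l))"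
      by (intro prod.cong) auto
    ultimately show ?thesis
      using k by (simp add: prod.remove[of "{..<N}" k])
  qed
  then show ?thesis
    unfolding act_def by (auto simp: sum_distrib_left mult.assoc cong: sum.cong)
qed

lemma act_update_mult:
  assumes g: "\<And>l. l < N \<Longrightarrow> g l \<in> carrier_mat (d l) (d l)" and k: "k < N"
    and B: "B \<in> carrier_mat (d k) (d k)"
  shows "act N d (g(k := g k * B)) \<Psi> = act N d g (act N d ((G_one N d)(k := B)) \<Psi>)"
proof -
  have "g l * ((G_one N d)(k := B)) l = (g(k := g k * B)) l" if "l < N" for l
    using right_mult_one_mat[OF g[OF that]] that by (simp add: G_one_def)
  then have "act N d (g(k := g k * B)) \<Psi> = act N d (\<lambda>l. g l * ((G_one N d)(k := B)) l) \<Psi>"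
    by (intro act_cong) simp
  also have "\<dots> = act N d g (act N d ((G_one N d)(k := B)) \<Psi>)"
    by (rule act_mult[symmetric]) (use g B k in \<open>auto simp: G_one_def\<close>)
  finally show ?thesis .
qed

text \<open>L_X = X_1 (x) 1 (x) ... (x) 1 + ... + 1 (x) ... (x) 1 (x) X_N, the derivative of the action
  at the identity in direction X.\<close>

definition lie_act :: "nat \<Rightarrow> (nat \<Rightarrow> nat) \<Rightarrow> (nat \<Rightarrow> complex mat) \<Rightarrow>
    ((nat \<Rightarrow> nat) \<Rightarrow> complex) \<Rightarrow> ((nat \<Rightarrow> nat) \<Rightarrow> complex)" where
  "lie_act N d X \<Psi> = (\<lambda>i. \<Sum>k<N. act N d ((G_one N d)(k := X k)) \<Psi> i)"

lemma lie_act_smult: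
  assumes "\<And>k. k < N \<Longrightarrow> X k \<in> carrier_mat (d k) (d k)"
  shows "lie_act N d (\<lambda>k. c \<cdot>\<^sub>m X k) \<Psi> = (\<lambda>i. c * lie_act N d X \<Psi> i)"
proof -
  have "act N d ((G_one N d)(k := c \<cdot>\<^sub>m X k)) \<Psi> = (\<lambda>i. c * act N d ((G_one N d)(k := X k)) \<Psi> i)"
    if "k < N" for k
    using act_update_smult[of k N "(G_one N d)(k := X k)" d c \<Psi>] assms that by simp
  then show ?thesis
    unfolding lie_act_def by (simp add: sum_distrib_left)
qed

lemma has_vector_derivative_act:
  assumes \<gamma>': "\<And>k a b. k < N \<Longrightarrow> a < d k \<Longrightarrow> b < d k \<Longrightarrow>
      ((\<lambda>t. \<gamma> t k $$ (a,b)) has_vector_derivative D k $$ (a,b)) (at s)"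
  shows "((\<lambda>t. act N d (\<gamma> t) \<Psi> i) has_vector_derivative (\<Sum>k<N. act N d ((\<gamma> s)(k := D k)) \<Psi> i)) (at s)"
proof (cases "i \<in> idx N d")
  case False
  then show ?thesis by (simp add: act_def)
next
  case i: True
  have upd: "(\<Prod>l<N. ((\<gamma> s)(k := D k)) l $$ (i l, j l)) =
      D k $$ (i k, j k) * (\<Prod>l\<in>{..<N} - {k}. \<gamma> s l $$ (i l, j l))" if "k < N" for k j
  proof -
    have "(\<Prod>l\<in>{..<N} - {k}. ((\<gamma> s)(k := D k)) l $$ (i l, j l)) = (\<Prod>l\<in>{..<N} - {k}. \<gamma> s l $$ (i l, j l))"
      by (intro prod.cong) auto
    then show ?thesis using that by (simp add: prod.remove[of "{..<N}" k])
  qed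
  have "((\<lambda>t. \<Sum>j\<in>idx N d. (\<Prod>k<N. \<gamma> t k $$ (i k, j k)) * \<Psi> j) has_vector_derivative
      (\<Sum>j\<in>idx N d. (\<Sum>k<N. D k $$ (i k, j k) * (\<Prod>l\<in>{..<N} - {k}. \<gamma> s l $$ (i l, j l))) * \<Psi> j)) (at s)"
    by (intro has_vector_derivative_sum has_vector_derivative_mult_left has_vector_derivative_prod \<gamma>')
      (use i idx_lt in auto)
  also have "(\<Sum>j\<in>idx N d. (\<Sum>k<N. D k $$ (i k, j k) * (\<Prod>l\<in>{..<N} - {k}. \<gamma> s l $$ (i l, j l))) * \<Psi> j)
      = (\<Sum>k<N. \<Sum>j\<in>idx N d. D k $$ (i k, j k) * (\<Prod>l\<in>{..<N} - {k}. \<gamma> s l $$ (i l, j l)) * \<Psi> j)"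
    by (subst sum.swap) (simp add: sum_distrib_right)
  also have "\<dots> = (\<Sum>k<N. act N d ((\<gamma> s)(k := D k)) \<Psi> i)"
    using i by (simp add: act_def upd del: fun_upd_apply)
  finally show ?thesis using i by (simp add: act_def)
qed

definition exp_curve :: "nat \<Rightarrow> (nat \<Rightarrow> complex mat) \<Rightarrow> real \<Rightarrow> nat \<Rightarrow> complex mat" where
  "exp_curve N B t = (\<lambda>k. if k < N then mat_exp (B k) (of_real t) else 1\<^sub>m 0)"

lemma exp_curve_zero:
  "(\<And>k. k < N \<Longrightarrow> B k \<in> carrier_mat (d k) (d k)) \<Longrightarrow> exp_curve N B 0 = G_one N d"
  unfolding exp_curve_def G_one_def by (auto simp: mat_exp_zero)

lemma exp_curve_in_SLgroup:
  assumes "\<And>k. k < N \<Longrightarrow> B k \<in> carrier_mat (d k) (d k)" and "\<And>k. k < N \<Longrightarrow> mat_trace (B k) = 0"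
  shows "exp_curve N B t \<in> SLgroup N d"
proof -
  have "det (mat_exp (B k) (of_real t)) = 1" if "k < N" for k
    using det_mat_exp[OF assms(1)[OF that]] assms(2)[OF that] by simp
  then show ?thesis unfolding SLgroup_def exp_curve_def using assms(1) by auto
qed

lemma has_vector_derivative_exp_curve:
  assumes B: "B k \<in> carrier_mat (d k) (d k)" and "k < N" "a < d k" "b < d k"
  shows "((\<lambda>t. exp_curve N B t k $$ (a,b)) has_vector_derivative (exp_curve N B s k * B k) $$ (a,b)) (at s)"
  using has_vector_derivative_real_field[OF mat_exp_has_field_derivative[OF assms(1,3,4)]] assms(2)
  by (simp add: exp_curve_def)

lemma has_vector_derivative_proportional_imp_exp:
  fixes f :: "real \<Rightarrow> complex"
  assumes f': "\<And>s. (f has_vector_derivative \<mu> * f s) (at s)"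
  shows "f t = exp (of_real t * \<mu>) * f 0"
proof -
  define h where "h s = exp (- (of_real s * \<mu>)) * f s" for s
  have "(h has_derivative (\<lambda>_. 0)) (at s)" for s
  proof -
    have "((\<lambda>s. exp (- (of_real s * \<mu>))) has_vector_derivative exp (- (of_real s * \<mu>)) * - \<mu>) (at s)"
    proof (rule has_vector_derivative_real_field)
      show "((\<lambda>z. exp (- (z * \<mu>))) has_field_derivative exp (- (of_real s * \<mu>)) * - \<mu>) (at (of_real s))"
        by (auto intro!: derivative_eq_intros)
    qed
    from has_vector_derivative_mult[OF this f'[of s]]
    have "(h has_vector_derivative 0) (at s)"
      unfolding h_def by (simp add: algebra_simps)
    then show ?thesis by (simp add: has_vector_derivative_def)
  qed
  then obtain c where "\<And>s. h s = c"
    using has_derivative_zero_constant[of UNIV h] by auto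
  then have "h t = h 0" by simp
  then show ?thesis by (simp add: h_def exp_minus field_simps)
qed

lemma act_exp_curve:
  assumes B: "\<And>k. k < N \<Longrightarrow> B k \<in> carrier_mat (d k) (d k)" and \<Psi>: "\<Psi> \<in> hspace N d"
    and eig: "lie_act N d B \<Psi> = (\<lambda>i. \<mu> * \<Psi> i)"
  shows "act N d (exp_curve N B t) \<Psi> = (\<lambda>i. exp (of_real t * \<mu>) * \<Psi> i)"
proof
  fix i
  let ?E = "exp_curve N B"
  have E: "?E s k \<in> carrier_mat (d k) (d k)" if "k < N" for s k
    using B that by (simp add: exp_curve_def)
  have slot: "act N d ((?E s)(k := ?E s k * B k)) \<Psi> = act N d (?E s) (act N d ((G_one N d)(k := B k)) \<Psi>)"
    if "k < N" for s k
    using act_update_mult[of N "?E s" d k "B k" \<Psi>] E B that by blast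
  have "((\<lambda>t. act N d (?E t) \<Psi> i) has_vector_derivative \<mu> * act N d (?E s) \<Psi> i) (at s)" for s
  proof -
    have "((\<lambda>t. act N d (?E t) \<Psi> i) has_vector_derivative
        (\<Sum>k<N. act N d ((?E s)(k := ?E s k * B k)) \<Psi> i)) (at s)"
      by (intro has_vector_derivative_act has_vector_derivative_exp_curve) (use B in auto)
    also have "(\<Sum>k<N. act N d ((?E s)(k := ?E s k * B k)) \<Psi> i) = act N d (?E s) (lie_act N d B \<Psi>) i"
      by (simp add: slot lie_act_def act_sum)
    also have "\<dots> = \<mu> * act N d (?E s) \<Psi> i"
      by (simp add: eig act_scale)
    finally show ?thesis .
  qed
  from has_vector_derivative_proportional_imp_exp[OF this]
  show "act N d (?E t) \<Psi> i = exp (of_real t * \<mu>) * \<Psi> i"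
    by (simp add: exp_curve_zero[OF B] act_G_one[OF \<Psi>])
qed

section \<open>Semistable vectors and projective stabilisers\<close>

lemma G_one_in_SLgroup: "G_one N d \<in> SLgroup N d"
  unfolding SLgroup_def G_one_def by auto

lemma tangent_mono:
  assumes "H1 \<subseteq> H2"
  shows "tangent N d H1 \<subseteq> tangent N d H2"
proof
  fix X assume "X \<in> tangent N d H1"
  then obtain \<gamma> :: "real \<Rightarrow> nat \<Rightarrow> complex mat" where
    "\<forall>k<N. X k \<in> carrier_mat (d k) (d k)" "\<forall>k\<ge>N. X k = 0\<^sub>m 0 0"
    "\<forall>t. \<gamma> t \<in> H1" "\<gamma> 0 = G_one N d"
    "\<forall>k<N. \<forall>a<d k. \<forall>b<d k. ((\<lambda>t. \<gamma> t k $$ (a, b)) has_vector_derivative X k $$ (a, b)) (at 0)"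
    unfolding tangent_def by blast
  with assms show "X \<in> tangent N d H2"
    unfolding tangent_def by blast
qed

lemma mat_trace_eq_zero_if_tangent_SLgroup:
  assumes X: "X \<in> tangent N d H" and H: "H \<subseteq> SLgroup N d" and k: "k < N"
  shows "mat_trace (X k) = 0"
proof -
  from X obtain \<gamma> where \<gamma>: "\<And>t. \<gamma> t \<in> H" and \<gamma>0: "\<gamma> 0 = G_one N d"
    and \<gamma>': "\<forall>k<N. \<forall>a<d k. \<forall>b<d k. ((\<lambda>t. \<gamma> t k $$ (a,b)) has_vector_derivative X k $$ (a,b)) (at 0)"
    and Xk: "X k \<in> carrier_mat (d k) (d k)"
    unfolding tangent_def using k by blast
  have car: "\<gamma> t k \<in> carrier_mat (d k) (d k)" and det1: "det (\<gamma> t k) = 1" for t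
    using \<gamma>[of t] H k unfolding SLgroup_def by auto
  have "((\<lambda>t. det (\<gamma> t k)) has_vector_derivative (\<Sum>i<d k. X k $$ (i,i))) (at 0)"
    by (rule has_vector_derivative_det_at_one[OF car]) (use \<gamma>0 \<gamma>' k in \<open>auto simp: G_one_def\<close>)
  moreover have "((\<lambda>t. det (\<gamma> t k)) has_vector_derivative 0) (at 0)"
    by (simp add: det1)
  ultimately have "(\<Sum>i<d k. X k $$ (i,i)) = 0"
    by (rule vector_derivative_unique_at)
  then show ?thesis using Xk by (simp add: mat_trace_def)
qed

lemma semistable_imp_nonzero:
  assumes "semistable N d \<Psi>"
  shows "\<Psi> \<noteq> (\<lambda>_. 0)"
proof
  assume "\<Psi> = (\<lambda>_. 0)"
  then have "(\<lambda>_. 0) \<in> orbit N d \<Psi>"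
    unfolding orbit_def using G_one_in_SLgroup act_zero by (metis image_eqI)
  then show False using assms closure_subset unfolding semistable_def by blast
qed

lemma not_semistable_if_scalings_tend_to_zero:
  assumes lim: "c \<longlonglongrightarrow> 0" and orb: "\<And>n. (\<lambda>i. c n * \<Psi> i) \<in> orbit N d \<Psi>"
  shows "\<not> semistable N d \<Psi>"
proof -
  define \<phi> :: "complex \<Rightarrow> (nat \<Rightarrow> nat) \<Rightarrow> complex" where "\<phi> z = (\<lambda>i. z * \<Psi> i)" for z
  have "continuous_on UNIV \<phi>"
    unfolding \<phi>_def by (intro continuous_on_coordinatewise_then_product continuous_intros)
  then have "(\<lambda>n. \<phi> (c n)) \<longlonglongrightarrow> \<phi> 0"
    by (intro isCont_tendsto_compose[OF _ lim]) (simp add: continuous_on_eq_continuous_at)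
  moreover have "\<forall>\<^sub>F n in sequentially. \<phi> (c n) \<in> closure (orbit N d \<Psi>)"
    using orb closure_subset unfolding \<phi>_def by (intro always_eventually) blast
  ultimately have "\<phi> 0 \<in> closure (orbit N d \<Psi>)"
    by (intro Lim_in_closed_set[of _ "\<lambda>n. \<phi> (c n)" sequentially]) auto
  then show ?thesis by (simp add: semistable_def \<phi>_def)
qed

lemma lie_act_eigenvalue_eq_zero_if_semistable:
  assumes \<Psi>: "\<Psi> \<in> hspace N d" and ss: "semistable N d \<Psi>"
    and X: "\<And>k. k < N \<Longrightarrow> X k \<in> carrier_mat (d k) (d k)"
    and tr: "\<And>k. k < N \<Longrightarrow> mat_trace (X k) = 0"
    and eig: "lie_act N d X \<Psi> = (\<lambda>i. \<mu> * \<Psi> i)"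
  shows "\<mu> = 0"
proof (rule ccontr)
  assume "\<mu> \<noteq> 0"
  define B where "B k = (- 1 / \<mu>) \<cdot>\<^sub>m X k" for k
  have B: "B k \<in> carrier_mat (d k) (d k)" "mat_trace (B k) = 0" if "k < N" for k
    using X[OF that] tr[OF that] by (auto simp: B_def mat_trace_smult)
  have "lie_act N d B \<Psi> = (\<lambda>i. - 1 * \<Psi> i)"
    using \<open>\<mu> \<noteq> 0\<close> unfolding B_def by (simp add: lie_act_smult[OF X] eig)
  from act_exp_curve[OF B(1) \<Psi> this]
  have "act N d (exp_curve N B (real n)) \<Psi> = (\<lambda>i. of_real (exp (- real n)) * \<Psi> i)" for n
    by (simp add: exp_of_real[symmetric])
  moreover have "exp_curve N B (real n) \<in> SLgroup N d" for n
    using exp_curve_in_SLgroup B by blast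
  ultimately have "(\<lambda>i. of_real (exp (- real n)) * \<Psi> i) \<in> orbit N d \<Psi>" for n
    unfolding orbit_def by (metis image_eqI)
  moreover have "(\<lambda>n. exp (- real n)) \<longlonglongrightarrow> 0"
    by (rule filterlim_compose[OF exp_at_bot])
      (rule filterlim_uminus_at_top[THEN iffD1, OF filterlim_real_sequentially])
  then have "(\<lambda>n. complex_of_real (exp (- real n))) \<longlonglongrightarrow> 0"
    by (metis tendsto_of_real of_real_0)
  ultimately show False
    using not_semistable_if_scalings_tend_to_zero ss by blast
qed

lemma lie_act_eigenvector_if_tangent_proj_stab:
  assumes X: "X \<in> tangent N d (proj_stab N d \<Psi>)" and nz: "\<Psi> \<noteq> (\<lambda>_. 0)"
  obtains \<mu> where "lie_act N d X \<Psi> = (\<lambda>i. \<mu> * \<Psi> i)"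
proof -
  obtain i0 where i0: "\<Psi> i0 \<noteq> 0" using nz by blast
  from X obtain \<gamma> where \<gamma>: "\<And>t. \<gamma> t \<in> proj_stab N d \<Psi>" and \<gamma>0: "\<gamma> 0 = G_one N d"
    and \<gamma>': "\<And>k a b. k < N \<Longrightarrow> a < d k \<Longrightarrow> b < d k \<Longrightarrow>
        ((\<lambda>t. \<gamma> t k $$ (a,b)) has_vector_derivative X k $$ (a,b)) (at 0)"
    unfolding tangent_def by blast
  have scal: "act N d (\<gamma> t) \<Psi> i = act N d (\<gamma> t) \<Psi> i0 * (\<Psi> i / \<Psi> i0)" for t i
  proof -
    obtain c where "act N d (\<gamma> t) \<Psi> = (\<lambda>i. c * \<Psi> i)"
      using \<gamma>[of t] unfolding proj_stab_def by blast
    then show ?thesis using i0 by simp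
  qed
  have der: "((\<lambda>t. act N d (\<gamma> t) \<Psi> i) has_vector_derivative lie_act N d X \<Psi> i) (at 0)" for i
    using has_vector_derivative_act[of N d \<gamma> X 0 \<Psi> i, OF \<gamma>'] \<gamma>0 by (simp add: lie_act_def)
  have "lie_act N d X \<Psi> i = lie_act N d X \<Psi> i0 / \<Psi> i0 * \<Psi> i" for i
  proof -
    have "((\<lambda>t. act N d (\<gamma> t) \<Psi> i) has_vector_derivative lie_act N d X \<Psi> i0 * (\<Psi> i / \<Psi> i0)) (at 0)"
      unfolding scal[of _ i] by (intro has_vector_derivative_mult_left der)
    from vector_derivative_unique_at[OF der this] show ?thesis by simp
  qed
  then show ?thesis by (intro that[of "lie_act N d X \<Psi> i0 / \<Psi> i0"] ext)
qed

lemma tangent_stab_if_lie_act_zero: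
  assumes X: "\<And>k. k < N \<Longrightarrow> X k \<in> carrier_mat (d k) (d k)" and X0: "\<And>k. k \<ge> N \<Longrightarrow> X k = 0\<^sub>m 0 0"
    and tr: "\<And>k. k < N \<Longrightarrow> mat_trace (X k) = 0" and \<Psi>: "\<Psi> \<in> hspace N d"
    and ann: "lie_act N d X \<Psi> = (\<lambda>_. 0)"
  shows "X \<in> tangent N d (stab N d \<Psi>)"
  unfolding tangent_def
proof (intro CollectI conjI allI impI exI[where x="exp_curve N X"])
  have "lie_act N d X \<Psi> = (\<lambda>i. 0 * \<Psi> i)"
    using ann by (simp add: fun_eq_iff)
  from act_exp_curve[OF X \<Psi> this] exp_curve_in_SLgroup[OF X tr]
  show "exp_curve N X t \<in> stab N d \<Psi>" for t
    by (simp add: stab_def)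
  show "exp_curve N X 0 = G_one N d"
    by (rule exp_curve_zero[OF X])
  fix k a b assume k: "k < N" and ab: "a < d k" "b < d k"
  have "exp_curve N X 0 k * X k = X k"
    using left_mult_one_mat[OF X[OF k]] k by (simp add: exp_curve_zero[OF X] G_one_def)
  then show "((\<lambda>t. exp_curve N X t k $$ (a,b)) has_vector_derivative X k $$ (a,b)) (at 0)"
    using has_vector_derivative_exp_curve[of X k d N a b 0, OF X[OF k] k ab] by simp
qed (use X X0 in auto)

lemma tangent_proj_stab_subset_tangent_stab:
  assumes \<Psi>: "\<Psi> \<in> hspace N d" and ss: "semistable N d \<Psi>"
  shows "tangent N d (proj_stab N d \<Psi>) \<subseteq> tangent N d (stab N d \<Psi>)"
proof
  fix X assume T: "X \<in> tangent N d (proj_stab N d \<Psi>)"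
  then have X: "\<And>k. k < N \<Longrightarrow> X k \<in> carrier_mat (d k) (d k)"
    and X0: "\<And>k. k \<ge> N \<Longrightarrow> X k = 0\<^sub>m 0 0"
    unfolding tangent_def by auto
  have tr: "mat_trace (X k) = 0" if "k < N" for k
    using mat_trace_eq_zero_if_tangent_SLgroup[OF T _ that] by (auto simp: proj_stab_def)
  obtain \<mu> where eig: "lie_act N d X \<Psi> = (\<lambda>i. \<mu> * \<Psi> i)"
    using lie_act_eigenvector_if_tangent_proj_stab[OF T semistable_imp_nonzero[OF ss]] .
  have "\<mu> = 0"
    by (rule lie_act_eigenvalue_eq_zero_if_semistable[OF \<Psi> ss X tr eig])
  with eig have "lie_act N d X \<Psi> = (\<lambda>_. 0)"
    by (simp add: fun_eq_iff)
  with X X0 tr \<Psi> show "X \<in> tangent N d (stab N d \<Psi>)"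
    by (intro tangent_stab_if_lie_act_zero) auto
qed

theorem mainTheorem3:
  fixes N :: nat and d :: "nat \<Rightarrow> nat" and \<Psi> :: "(nat \<Rightarrow> nat) \<Rightarrow> complex"
  assumes "\<forall>k<N. d k \<ge> 2"
    and "\<Psi> \<in> hspace N d"
    and "semistable N d \<Psi>"
  shows "orbit_dim N d \<Psi> = proj_orbit_dim N d \<Psi>"
proof -
  have "stab N d \<Psi> \<subseteq> proj_stab N d \<Psi>"
    unfolding stab_def proj_stab_def by (auto intro!: exI[where x=1])
  then have "tangent N d (proj_stab N d \<Psi>) = tangent N d (stab N d \<Psi>)"
    using tangent_mono tangent_proj_stab_subset_tangent_stab[OF assms(2,3)] by blast
  then show ?thesis
    unfolding orbit_dim_def proj_orbit_dim_def lie_dim_def by simp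
qed

end
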